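(* Let $0<|a|<M$. Then $$\{\xi_t<0\}\cap\{\xi\cdot v_{\mathcal H}>0\}\cap K=\emptyset,$$ where $K\subset T^*{\rm M}_{\rm I}\setminus o$ is the trapped set.
   Context: ${\rm M}_{\rm I}=\mathbb R_t\times(r_+,\infty)_r\times\mathbb S^2_{\theta,\varphi}$ is the Kerr exterior in Boyer–Lindquist coordinates with $r_+=M+\sqrt{M^2-a^2}$, $\Delta=r^2-2Mr+a^2$, $\rho^2=r^2+a^2\cos^2\theta$, $\sigma^2=(r^2+a^2)^2-a^2\Delta\sin^2\theta$, and metric $g=-(1-\tfrac{2Mr}{\rho^2})dt^2-\tfrac{4aMr\sin^2\theta}{\rho^2}dt\,d\varphi+\tfrac{\rho^2}{\Delta}dr^2+\rho^2d\theta^2+\tfrac{\sigma^2}{\rho^2}\sin^2\theta\,d\varphi^2$. Covectors are $\xi=\xi_tdt+\xi_rdr+\xi_\theta d\theta+\xi_\varphi d\varphi$, $\tilde\xi=(\xi_t,\xi_r,\xi_\varphi,\xi_\theta)$. Set $G_r=\Delta\xi_r^2-\frac1\Delta((r^2+a^2)\xi_t+a\xi_\varphi)^2$, $G_\theta=\xi_\theta^2+\frac1{\sin^2\theta}(a\sin^2\theta\xi_t+\xi_\varphi)^2$, $G=G_r+G_\theta=\rho^{-2}g^{-1}(\xi,\xi)$. The trapped set is $K=\{G=\partial_rG_r=\xi_r=0,\ \tilde\xi\neq0\}$ (with $\partial_r$ taken at fixed $\xi$). The Killing field $v_{\mathcal H}=\partial_t+\Omega_{\mathcal H}\partial_\varphi$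 with $\Omega_{\mathcal H}=a/(r_+^2+a^2)$, so $\xi\cdot v_{\mathcal H}=\xi_t+\Omega_{\mathcal H}\xi_\varphi$ (on the rotation axis $v_{\mathcal H}=\partial_t$ in the regular coordinates $(t,r,x_1,x_2)$, $x_1=\sin\theta\cos\varphi$, $x_2=\sin\theta\sin\varphi$). *)

theory Defs
  imports "HOL-Analysis.Analysis"
begin

text \<open>Kerr exterior quantities in Boyer--Lindquist coordinates.
  Covector components are passed in the order xi_t, xi_r, xi_phi, xi_theta.\<close>

definition r_plus :: "real \<Rightarrow> real \<Rightarrow> real" where
  "r_plus M a = M + sqrt (M\<^sup>2 - a\<^sup>2)"

definition Delta :: "real \<Rightarrow> real \<Rightarrow> real \<Rightarrow> real" where
  "Delta M a r = r\<^sup>2 - 2 * M * r + a\<^sup>2"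

definition Omega_H :: "real \<Rightarrow> real \<Rightarrow> real" where
  "Omega_H M a = a / ((r_plus M a)\<^sup>2 + a\<^sup>2)"

definition G_r :: "real \<Rightarrow> real \<Rightarrow> real \<Rightarrow> real \<Rightarrow> real \<Rightarrow> real \<Rightarrow> real" where
  "G_r M a r xi_t xi_r xi_phi =
     Delta M a r * xi_r\<^sup>2 - ((r\<^sup>2 + a\<^sup>2) * xi_t + a * xi_phi)\<^sup>2 / Delta M a r"

definition G_theta :: "real \<Rightarrow> real \<Rightarrow> real \<Rightarrow> real \<Rightarrow> real \<Rightarrow> real" where
  "G_theta a \<theta> xi_t xi_phi xi_theta =
     xi_theta\<^sup>2 + (a * (sin \<theta>)\<^sup>2 * xi_t + xi_phi)\<^sup>2 / (sin \<theta>)\<^sup>2"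

definition G :: "real \<Rightarrow> real \<Rightarrow> real \<Rightarrow> real \<Rightarrow> real \<Rightarrow> real \<Rightarrow> real \<Rightarrow> real \<Rightarrow> real" where
  "G M a r \<theta> xi_t xi_r xi_phi xi_theta =
     G_r M a r xi_t xi_r xi_phi + G_theta a \<theta> xi_t xi_phi xi_theta"

text \<open>The trapped set K (t and phi play no role, so points are recorded as
  (r, theta, xi_t, xi_r, xi_phi, xi_theta)); off the rotation axis, 0 < theta < pi.\<close>

definition trapped_set :: "real \<Rightarrow> real \<Rightarrow> (real \<times> real \<times> real \<times> real \<times> real \<times> real) set" where
  "trapped_set M a = {(r, \<theta>, xi_t, xi_r, xi_phi, xi_theta).
      r > r_plus M a \<and> 0 < \<theta> \<and> \<theta> < pi \<and>
      G M a r \<theta> xi_t xi_r xi_phi xi_theta = 0 \<and>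
      ((\<lambda>s. G_r M a s xi_t xi_r xi_phi) has_real_derivative 0) (at r) \<and>
      xi_r = 0 \<and>
      (xi_t, xi_r, xi_phi, xi_theta) \<noteq> (0, 0, 0, 0)}"

end

theory Submission
  imports Defs
begin

text \<open>On the trapped set xi_r = 0 and G = \<partial>_r G_r = 0. With the radial frequency
  X(r) = (r^2 + a^2) xi_t + a xi_phi one has G_r = - X^2 / \<Delta>, so X = 0 would force
  G_theta = 0, hence xi_phi = - a sin^2\<theta> xi_t and X = \<rho>^2 xi_t = 0. Thus X \<noteq> 0 and
  \<partial>_r G_r = 0 reduces to 2 r xi_t \<Delta> = X (r - M). Now X(r) = X(r_+) + (r^2 - r_+^2) xi_t
  with X(r_+) = (r_+^2 + a^2) (xi \<cdot> v_H) > 0; multiplying by r - M > 0 and dividing by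
  xi_t < 0 gives 2 r \<Delta> < (r^2 - r_+^2)(r - M), whereas
  2 r \<Delta> - (r^2 - r_+^2)(r - M) = (r - r_+)((r - M)^2 + s (r + M)) > 0 with s = sqrt (M^2 - a^2).\<close>

definition radial_frequency :: "real \<Rightarrow> real \<Rightarrow> real \<Rightarrow> real \<Rightarrow> real" where
  "radial_frequency a r xi_t xi_phi = (r\<^sup>2 + a\<^sup>2) * xi_t + a * xi_phi"

lemma r_plus_ge:
  assumes "\<bar>a\<bar> \<le> M"
  shows "M \<le> r_plus M a"
  using assms abs_le_square_iff[of a M] unfolding r_plus_def by simp

lemma Delta_eq_mult:
  assumes "\<bar>a\<bar> \<le> M"
  shows "Delta M a r = (r - r_plus M a) * (r - (M - sqrt (M\<^sup>2 - a\<^sup>2)))"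
proof -
  have "a\<^sup>2 \<le> M\<^sup>2" using assms abs_le_square_iff[of a M] by simp
  then have "(sqrt (M\<^sup>2 - a\<^sup>2))\<^sup>2 = M\<^sup>2 - a\<^sup>2" by simp
  then show ?thesis unfolding Delta_def r_plus_def by (simp add: algebra_simps power2_eq_square)
qed

lemma Delta_pos:
  assumes "\<bar>a\<bar> \<le> M" and "r > r_plus M a"
  shows "Delta M a r > 0"
proof -
  have "a\<^sup>2 \<le> M\<^sup>2" using assms(1) abs_le_square_iff[of a M] by simp
  then have "r_plus M a \<ge> M - sqrt (M\<^sup>2 - a\<^sup>2)" unfolding r_plus_def by simp
  with assms show ?thesis by (simp add: Delta_eq_mult)
qed

lemma Delta_trapping_ineq:
  assumes "\<bar>a\<bar> \<le> M" and "r > r_plus M a"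
  shows "(r\<^sup>2 - (r_plus M a)\<^sup>2) * (r - M) < 2 * r * Delta M a r"
proof -
  define s where "s = sqrt (M\<^sup>2 - a\<^sup>2)"
  have "s \<ge> 0" unfolding s_def using assms(1) abs_le_square_iff[of a M] by simp
  have r_plus: "r_plus M a = M + s" unfolding r_plus_def s_def ..
  have Delta_r: "Delta M a r = (r - (M + s)) * (r - (M - s))"
    using Delta_eq_mult[OF assms(1)] unfolding r_plus s_def .
  have "2 * r * Delta M a r - (r\<^sup>2 - (r_plus M a)\<^sup>2) * (r - M)
      = (r - r_plus M a) * ((r - M)\<^sup>2 + s * (r + M))"
    unfolding Delta_r r_plus by (simp add: power2_eq_square algebra_simps)
  moreover have "(r - M)\<^sup>2 + s * (r + M) > 0"
    using assms \<open>s \<ge> 0\<close> by (simp add: r_plus add_pos_nonneg)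
  ultimately show ?thesis using assms(2) by (smt (verit) mult_pos_pos)
qed

lemma G_r_has_real_derivative:
  assumes "Delta M a r \<noteq> 0"
  shows "((\<lambda>s. G_r M a s xi_t xi_r xi_phi) has_real_derivative
     (2 * r - 2 * M) * xi_r\<^sup>2
     - (4 * r * xi_t * radial_frequency a r xi_t xi_phi * Delta M a r
        - (radial_frequency a r xi_t xi_phi)\<^sup>2 * (2 * r - 2 * M)) / (Delta M a r)\<^sup>2) (at r)"
  using assms unfolding G_r_def Delta_def radial_frequency_def
  apply (intro derivative_eq_intros)
  apply (rule refl)+
  apply simp_all
  apply (simp add: divide_simps)
  apply (simp add: algebra_simps power2_eq_square)
  done

lemma G_theta_eq_0_iff:
  assumes "sin \<theta> \<noteq> 0"
  shows "G_theta a \<theta> xi_t xi_phi xi_theta = 0 \<longleftrightarrow> xi_theta = 0 \<and> xi_phi = - a * (sin \<theta>)\<^sup>2 * xi_t"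
proof -
  have "(a * (sin \<theta>)\<^sup>2 * xi_t + xi_phi)\<^sup>2 / (sin \<theta>)\<^sup>2 \<ge> 0" by simp
  then have "G_theta a \<theta> xi_t xi_phi xi_theta = 0 \<longleftrightarrow>
      xi_theta\<^sup>2 = 0 \<and> (a * (sin \<theta>)\<^sup>2 * xi_t + xi_phi)\<^sup>2 / (sin \<theta>)\<^sup>2 = 0"
    unfolding G_theta_def by (smt (verit) zero_le_power2)
  with assms show ?thesis by (auto simp: algebra_simps)
qed

lemma radial_frequency_eq_rho_sq:
  assumes "xi_phi = - a * (sin \<theta>)\<^sup>2 * xi_t"
  shows "radial_frequency a r xi_t xi_phi = (r\<^sup>2 + a\<^sup>2 * (cos \<theta>)\<^sup>2) * xi_t"
  unfolding radial_frequency_def assms by (simp add: sin_squared_eq algebra_simps) (simp add: power2_eq_square)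

lemma trapped_set_turning_eq:
  assumes "\<bar>a\<bar> \<le> M" and K: "(r, \<theta>, xi_t, xi_r, xi_phi, xi_theta) \<in> trapped_set M a"
    and "xi_t \<noteq> 0"
  shows "2 * r * xi_t * Delta M a r = radial_frequency a r xi_t xi_phi * (r - M)"
proof -
  define X where "X = radial_frequency a r xi_t xi_phi"
  from K have r: "r > r_plus M a" and "0 < \<theta>" "\<theta> < pi" and xi_r: "xi_r = 0"
    and G0: "G M a r \<theta> xi_t xi_r xi_phi xi_theta = 0"
    and G_r': "((\<lambda>s. G_r M a s xi_t xi_r xi_phi) has_real_derivative 0) (at r)"
    unfolding trapped_set_def by auto
  have sin: "sin \<theta> \<noteq> 0" using \<open>0 < \<theta>\<close> \<open>\<theta> < pi\<close> sin_gt_zero by fastforce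
  have Delta: "Delta M a r > 0" using assms(1) r by (rule Delta_pos)
  have "X \<noteq> 0"
  proof
    assume "X = 0"
    then have "G_theta a \<theta> xi_t xi_phi xi_theta = 0"
      using G0 unfolding G_def G_r_def X_def radial_frequency_def xi_r by simp
    then have "X = (r\<^sup>2 + a\<^sup>2 * (cos \<theta>)\<^sup>2) * xi_t"
      unfolding X_def using sin by (simp add: G_theta_eq_0_iff radial_frequency_eq_rho_sq)
    moreover have "r\<^sup>2 + a\<^sup>2 * (cos \<theta>)\<^sup>2 > 0"
      using r r_plus_ge[OF assms(1)] assms(1) by (simp add: add_pos_nonneg)
    ultimately show False using \<open>X = 0\<close> \<open>xi_t \<noteq> 0\<close> by simp
  qed
  have "0 = - (4 * r * xi_t * X * Delta M a r - X\<^sup>2 * (2 * r - 2 * M)) / (Delta M a r)\<^sup>2"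
    using DERIV_unique[OF G_r' G_r_has_real_derivative] Delta unfolding X_def xi_r by simp
  then have "X * (2 * r * xi_t * Delta M a r - X * (r - M)) = 0"
    using Delta by (simp add: power2_eq_square algebra_simps)
  with \<open>X \<noteq> 0\<close> show ?thesis unfolding X_def by simp
qed

lemma Omega_H_pairing_pos_iff:
  assumes "a \<noteq> 0"
  shows "xi_t + Omega_H M a * xi_phi > 0 \<longleftrightarrow> radial_frequency a (r_plus M a) xi_t xi_phi > 0"
proof -
  have pos: "(r_plus M a)\<^sup>2 + a\<^sup>2 > 0" using assms by (simp add: add_nonneg_pos)
  then have "(r_plus M a)\<^sup>2 + a\<^sup>2 \<noteq> 0" by linarith
  then have "xi_t + Omega_H M a * xi_phi
      = radial_frequency a (r_plus M a) xi_t xi_phi / ((r_plus M a)\<^sup>2 + a\<^sup>2)"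
    unfolding Omega_H_def radial_frequency_def by (simp add: field_simps)
  with pos show ?thesis by (simp add: zero_less_divide_iff)
qed

lemma radial_frequency_horizon_nonpos:
  assumes "\<bar>a\<bar> \<le> M" and r: "r > r_plus M a" and "xi_t < 0"
    and turning: "2 * r * xi_t * Delta M a r = radial_frequency a r xi_t xi_phi * (r - M)"
  shows "radial_frequency a (r_plus M a) xi_t xi_phi \<le> 0"
proof (rule ccontr)
  assume "\<not> ?thesis"
  moreover have "radial_frequency a r xi_t xi_phi
      = radial_frequency a (r_plus M a) xi_t xi_phi + (r\<^sup>2 - (r_plus M a)\<^sup>2) * xi_t"
    unfolding radial_frequency_def by (simp add: algebra_simps)
  ultimately have "radial_frequency a r xi_t xi_phi > (r\<^sup>2 - (r_plus M a)\<^sup>2) * xi_t" by simp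
  moreover have "r - M > 0" using r r_plus_ge[OF assms(1)] by simp
  ultimately have "radial_frequency a r xi_t xi_phi * (r - M) > (r\<^sup>2 - (r_plus M a)\<^sup>2) * xi_t * (r - M)"
    by (rule mult_strict_right_mono)
  then have "(2 * r * Delta M a r) * xi_t > ((r\<^sup>2 - (r_plus M a)\<^sup>2) * (r - M)) * xi_t"
    unfolding turning[symmetric] by (simp only: mult_ac)
  then have "2 * r * Delta M a r < (r\<^sup>2 - (r_plus M a)\<^sup>2) * (r - M)"
    using \<open>xi_t < 0\<close> by (simp add: mult_less_cancel_right)
  with Delta_trapping_ineq[OF assms(1) r] show False by simp
qed

theorem lemma6p5:
  fixes M a :: real
  assumes "0 < \<bar>a\<bar>" and "\<bar>a\<bar> < M"
  shows "{(r, \<theta>, xi_t, xi_r, xi_phi, xi_theta). xi_t < 0} \<inter>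
         {(r, \<theta>, xi_t, xi_r, xi_phi, xi_theta). xi_t + Omega_H M a * xi_phi > 0} \<inter>
         trapped_set M a = {}"
proof -
  have aM: "\<bar>a\<bar> \<le> M" and "a \<noteq> 0" using assms by auto
  have False if K: "(r, \<theta>, xi_t, xi_r, xi_phi, xi_theta) \<in> trapped_set M a"
    and "xi_t < 0" and "xi_t + Omega_H M a * xi_phi > 0"
    for r \<theta> xi_t xi_r xi_phi xi_theta
  proof -
    have "r > r_plus M a" using K unfolding trapped_set_def by simp
    moreover have "2 * r * xi_t * Delta M a r = radial_frequency a r xi_t xi_phi * (r - M)"
      using trapped_set_turning_eq[OF aM K] \<open>xi_t < 0\<close> by simp
    ultimately have "radial_frequency a (r_plus M a) xi_t xi_phi \<le> 0"
      using radial_frequency_horizon_nonpos[OF aM] \<open>xi_t < 0\<close> by blast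
    with \<open>xi_t + Omega_H M a * xi_phi > 0\<close> \<open>a \<noteq> 0\<close> show False
      by (simp add: Omega_H_pairing_pos_iff)
  qed
  then show ?thesis by fastforce
qed

end
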